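(* Let $G$ be a finite abelian group such that $G$ is not isomorphic to $C_2^2$ (the Klein four-group). Then $\operatorname{Aut}(\mathcal{P}_{0}(G))\simeq \operatorname{Aut}(G)$.
   Context: For an additively written finite abelian group $G$, the reduced power monoid $\mathcal{P}_{0}(G)$ is the set of all subsets of $G$ containing $0$, with the operation of setwise addition $X+Y=\{x+y : x\in X, y\in Y\}$ and identity $\{0\}$. $\operatorname{Aut}$ denotes the group of monoid (resp. group) automorphisms. $C_n$ denotes the cyclic group of order $n$. (In the paper, the isomorphism arises from the canonical embedding $\operatorname{Aut}(G)\to\operatorname{Aut}(\mathcal{P}_0(G))$, $h\mapsto F_h$, where $F_h(X)=\{h(x):x\in X\}$.) *)

theory Defs
  imports "HOL-Algebra.Algebra"
begin

definition reduced_power_monoid :: "('a, 'b) monoid_scheme \<Rightarrow> 'a set monoid" where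
  "reduced_power_monoid G =
     \<lparr> partial_object.carrier = {Y. Y \<subseteq> carrier G \<and> one G \<in> Y},
       monoid.mult = (\<lambda>A B. set_mult G A B),
       monoid.one = {one G} \<rparr>"

end

theory Submission
  imports Defs
begin

(* An automorphism f of the reduced power monoid fixes the absorbing element G and the
   identity {1}, and it permutes the coatoms G - {b}, which are the sets M different from G
   with M Y = G for every Y different from {1}; write f (G - {b}) = G - {\<sigma> b}.
   If A has trivial stabiliser and p is not in A, the complement Y of p A^-1 satisfies
   A Y = G - {p}.  Transporting this identity along f gives f A = \<sigma>(A) for every such A,
   and, applied to A = {1, a} and A = {1, a, p a}, shows that \<sigma> is an automorphism of G.
   A set A with period t factors as (A - {t}) {1, t}, so by induction on |A| it remains to
   show f {1, t} = {1, \<sigma> t} for an involution t.  The preorder "every C completing B to G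
   also completes A" is intrinsic to the monoid and forces B into a translate of A; if
   f {1, t} = {1, \<sigma> k} with k different from t, comparing {1, t} with {1, t, c} for some c
   outside the subgroup {1, t, k, t k} gives a contradiction.  Such c exists unless G is the
   Klein four-group.  Hence every automorphism of the monoid is X |-> \<sigma>(X). *)

lemma carrier_reduced_power_monoid:
  "carrier (reduced_power_monoid G) = {Y. Y \<subseteq> carrier G \<and> \<one>\<^bsub>G\<^esub> \<in> Y}"
  by (simp add: reduced_power_monoid_def)

lemma mult_reduced_power_monoid:
  "A \<otimes>\<^bsub>reduced_power_monoid G\<^esub> B = A <#>\<^bsub>G\<^esub> B"
  by (simp add: reduced_power_monoid_def)

lemma carrier_AutoGroup: "carrier (AutoGroup H) = auto H"
  by (simp add: AutoGroup_def BijGroup_def)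

lemma mult_AutoGroup:
  "h \<in> auto H \<Longrightarrow> k \<in> auto H \<Longrightarrow> h \<otimes>\<^bsub>AutoGroup H\<^esub> k = compose (carrier H) h k"
  by (simp add: AutoGroup_def BijGroup_def auto_def)

lemma set_multI: "a \<in> A \<Longrightarrow> b \<in> B \<Longrightarrow> a \<otimes>\<^bsub>G\<^esub> b \<in> A <#>\<^bsub>G\<^esub> B"
  by (auto simp: set_mult_def)

lemma set_multE:
  assumes "w \<in> A <#>\<^bsub>G\<^esub> B"
  obtains a b where "a \<in> A" "b \<in> B" "w = a \<otimes>\<^bsub>G\<^esub> b"
  using assms by (auto simp: set_mult_def)

lemma (in monoid) set_mult_one_right: "A \<subseteq> carrier G \<Longrightarrow> A <#> {\<one>} = A"
  by (force simp: set_mult_def)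

lemma (in monoid) set_mult_one_left: "A \<subseteq> carrier G \<Longrightarrow> {\<one>} <#> A = A"
  by (force simp: set_mult_def)

lemma (in monoid) subset_set_mult: "A \<subseteq> carrier G \<Longrightarrow> \<one> \<in> B \<Longrightarrow> A \<subseteq> A <#> B"
  by (force simp: set_mult_def)

lemma (in comm_monoid) set_mult_comm: "A \<subseteq> carrier G \<Longrightarrow> B \<subseteq> carrier G \<Longrightarrow> A <#> B = B <#> A"
  by (auto simp: set_mult_def) (metis m_comm subsetD)+

lemma (in group) involution_inv: "t \<in> carrier G \<Longrightarrow> t \<otimes> t = \<one> \<Longrightarrow> inv t = t"
  using inv_equality by blast

abbreviation Klein4 :: "(int \<times> int) monoid" where
  "Klein4 \<equiv> DirProd (integer_mod_group 2) (integer_mod_group 2)"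

context comm_group
begin

abbreviation P0 :: "'a set set" where
  "P0 \<equiv> {Y. Y \<subseteq> carrier G \<and> \<one> \<in> Y}"

lemma carrier_in_P0: "carrier G \<in> P0"
  by simp

lemma set_mult_in_P0: "A \<in> P0 \<Longrightarrow> B \<in> P0 \<Longrightarrow> A <#> B \<in> P0"
  using set_mult_closed[of A B] set_multI[of \<one> A \<one> B G] by simp

lemma set_mult_carrier: "A \<in> P0 \<Longrightarrow> A <#> carrier G = carrier G"
  using set_mult_closed[of A "carrier G"] subset_set_mult[of "carrier G" A]
    set_mult_comm[of A "carrier G"] by simp

lemma div_eq_div_iff:
  assumes "a \<in> carrier G" "b \<in> carrier G" "c \<in> carrier G" "d \<in> carrier G"
  shows "a \<otimes> inv b = c \<otimes> inv d \<longleftrightarrow> a \<otimes> d = c \<otimes> b"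
proof -
  have "a \<otimes> inv b = c \<otimes> inv d \<longleftrightarrow> a = c \<otimes> inv d \<otimes> b"
    using assms inv_solve_right' by simp
  also have "\<dots> \<longleftrightarrow> a \<otimes> d = c \<otimes> inv d \<otimes> b \<otimes> d"
    using assms by simp
  also have "c \<otimes> inv d \<otimes> b \<otimes> d = c \<otimes> b"
    using assms by (simp add: m_ac)
  finally show ?thesis .
qed

lemma mult_inv_cancel: "x \<in> carrier G \<Longrightarrow> y \<in> carrier G \<Longrightarrow> x \<otimes> (y \<otimes> inv x) = y"
  using m_lcomm[of x y "inv x"] by simp

lemma carrier_eq_four_group:
  assumes fin: "finite (carrier G)" and card: "card (carrier G) \<le> 4"
    and a: "a \<in> carrier G" "a \<noteq> \<one>" "a \<otimes> a = \<one>"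
    and b: "b \<in> carrier G" "b \<noteq> \<one>" "b \<otimes> b = \<one>" and "a \<noteq> b"
  shows "carrier G = {\<one>, a, b, a \<otimes> b}" "card {\<one>, a, b, a \<otimes> b} = 4"
proof -
  have "a \<otimes> b \<noteq> \<one>"
    using a b \<open>a \<noteq> b\<close> involution_inv[OF b(1,3)] inv_equality[of a b] by auto
  moreover have "a \<otimes> b \<noteq> a" "a \<otimes> b \<noteq> b"
    using a b by auto
  ultimately show card4: "card {\<one>, a, b, a \<otimes> b} = 4"
    using a b \<open>a \<noteq> b\<close> by auto
  have sub: "{\<one>, a, b, a \<otimes> b} \<subseteq> carrier G"
    using a b by auto
  show "carrier G = {\<one>, a, b, a \<otimes> b}"
    using card_seteq[OF fin sub] card card4 by simp
qed

lemma iso_Klein4: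
  assumes "finite (carrier G)" "card (carrier G) \<le> 4"
    and a: "a \<in> carrier G" "a \<noteq> \<one>" "a \<otimes> a = \<one>"
    and b: "b \<in> carrier G" "b \<noteq> \<one>" "b \<otimes> b = \<one>" and "a \<noteq> b"
  shows "G \<cong> Klein4"
proof -
  note G = carrier_eq_four_group[OF assms]
  define e where "e u i = (if i = 1 then u else \<one>)" for u and i :: int
  define \<phi> where "\<phi> p = e a (fst p) \<otimes> e b (snd p)" for p :: "int \<times> int"
  have Z2: "carrier (integer_mod_group 2) = {0, 1}"
    by (auto simp: carrier_integer_mod_group)
  then have K: "carrier Klein4 = {0, 1} \<times> {0, 1}"
    by simp
  have e_closed: "e u i \<in> carrier G" if "u \<in> carrier G" for u i
    using that by (simp add: e_def)
  have e_add: "e u ((i + i') mod 2) = e u i \<otimes> e u i'"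
    if "u \<in> carrier G" "u \<otimes> u = \<one>" "i \<in> {0, 1}" "i' \<in> {0, 1}" for u i i'
    using that by (auto simp: e_def)
  have hom: "\<phi> \<in> hom Klein4 G"
  proof (rule homI)
    fix x assume "x \<in> carrier Klein4"
    then show "\<phi> x \<in> carrier G"
      using a b e_closed unfolding \<phi>_def by simp
  next
    fix x y assume "x \<in> carrier Klein4" "y \<in> carrier Klein4"
    then obtain i j i' j' where "x = (i, j)" "y = (i', j')"
      and "i \<in> {0, 1}" "j \<in> {0, 1}" "i' \<in> {0, 1}" "j' \<in> {0, 1}"
      using Z2 by auto
    then show "\<phi> (x \<otimes>\<^bsub>Klein4\<^esub> y) = \<phi> x \<otimes> \<phi> y"
      using a b unfolding \<phi>_def by (simp add: e_add e_closed m_ac)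
  qed
  have "\<phi> (0, 0) = \<one>" "\<phi> (1, 0) = a" "\<phi> (0, 1) = b" "\<phi> (1, 1) = a \<otimes> b"
    using a b unfolding \<phi>_def e_def by auto
  then have img: "\<phi> ` carrier Klein4 = carrier G"
    unfolding K G(1) by auto
  have "finite (carrier Klein4)" "card (carrier Klein4) = card (carrier G)"
    using K G by (simp_all add: card_cartesian_product)
  then have "inj_on \<phi> (carrier Klein4)"
    using eq_card_imp_inj_on img by metis
  with img have "bij_betw \<phi> (carrier Klein4) (carrier G)"
    by (simp add: bij_betw_def)
  then have "Klein4 \<cong> G"
    using hom by (intro is_isoI isoI)
  then show ?thesis
    using group.iso_sym DirProd_group group_integer_mod_group by blast
qed

lemma exists_not_in_four_subgroup:
  assumes "finite (carrier G)" "\<not> G \<cong> Klein4"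
    and "a \<in> carrier G" "a \<noteq> \<one>" "a \<otimes> a = \<one>" "b \<in> carrier G" "b \<noteq> \<one>" "b \<otimes> b = \<one>" "a \<noteq> b"
  obtains c where "c \<in> carrier G" "c \<notin> {\<one>, a, b, a \<otimes> b}"
proof -
  have "\<not> card (carrier G) \<le> 4"
    using iso_Klein4[OF assms(1) _ assms(3-9)] assms(2) by blast
  moreover have "card {\<one>, a, b, a \<otimes> b} \<le> 4"
    using card_length[of "[\<one>, a, b, a \<otimes> b]"] by simp
  ultimately have "\<not> carrier G \<subseteq> {\<one>, a, b, a \<otimes> b}"
    using card_mono[of "{\<one>, a, b, a \<otimes> b}" "carrier G"] by auto
  then show thesis
    using that by blast
qed

section \<open>Aperiodic sets and coatoms\<close>

definition aperiodic :: "'a set \<Rightarrow> bool" where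
  "aperiodic A \<longleftrightarrow> (\<forall>s\<in>carrier G. (\<forall>x\<in>A. x \<otimes> s \<in> A) \<longrightarrow> s = \<one>)"

lemma not_aperiodic_iff:
  assumes "A \<in> P0"
  shows "\<not> aperiodic A \<longleftrightarrow> (\<exists>Z\<in>P0. Z \<noteq> {\<one>} \<and> A <#> Z = A)"
proof
  assume "\<not> aperiodic A"
  then obtain s where s: "s \<in> carrier G" "s \<noteq> \<one>" "\<forall>x\<in>A. x \<otimes> s \<in> A"
    by (auto simp: aperiodic_def)
  have "A <#> {\<one>, s} \<subseteq> A"
    using s assms by (auto elim!: set_multE)
  then have "A <#> {\<one>, s} = A"
    using assms subset_set_mult[of A "{\<one>, s}"] by blast
  with s show "\<exists>Z\<in>P0. Z \<noteq> {\<one>} \<and> A <#> Z = A"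
    by (intro bexI[of _ "{\<one>, s}"]) auto
next
  assume "\<exists>Z\<in>P0. Z \<noteq> {\<one>} \<and> A <#> Z = A"
  then obtain Z z where "Z \<in> P0" "A <#> Z = A" "z \<in> Z" "z \<noteq> \<one>"
    by blast
  then show "\<not> aperiodic A"
    unfolding aperiodic_def using set_multI[of _ A z Z G] by blast
qed

lemma aperiodic_pair:
  assumes "a \<in> carrier G" "a \<otimes> a \<noteq> \<one>"
  shows "aperiodic {\<one>, a}"
  unfolding aperiodic_def
proof (intro ballI impI)
  fix s assume "s \<in> carrier G" "\<forall>x\<in>{\<one>, a}. x \<otimes> s \<in> {\<one>, a}"
  with assms show "s = \<one>"
    by (cases "s = a") auto
qed

lemma aperiodic_triple:
  assumes t: "t \<in> carrier G" "t \<noteq> \<one>" "t \<otimes> t = \<one>"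
    and c: "c \<in> carrier G" "c \<noteq> \<one>" "c \<noteq> t"
  shows "aperiodic {\<one>, t, c}"
  unfolding aperiodic_def
proof (intro ballI impI)
  fix s assume s: "s \<in> carrier G" "\<forall>x\<in>{\<one>, t, c}. x \<otimes> s \<in> {\<one>, t, c}"
  then have "s \<in> {\<one>, t, c}"
    by (metis insertI1 l_one)
  moreover have "t \<otimes> s \<in> {\<one>, t, c}" "c \<otimes> s \<in> {\<one>, t, c}"
    using s by auto
  ultimately have "s = \<one> \<or> c \<otimes> t \<in> {\<one>, t, c}"
    using m_comm[OF t(1) c(1)] by auto
  moreover have "c \<otimes> t \<noteq> \<one>"
    using t c involution_inv[OF t(1,3)] inv_equality[of c t] by auto
  moreover have "c \<otimes> t \<noteq> t" "c \<otimes> t \<noteq> c"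
    using t c by auto
  ultimately show "s = \<one>"
    by blast
qed

lemma periodic_decomposition:
  assumes "A \<subseteq> carrier G" "t \<in> carrier G" "t \<noteq> \<one>" "\<one> \<in> A" "\<forall>x\<in>A. x \<otimes> t \<in> A"
  shows "(A - {t}) <#> {\<one>, t} = A"
proof
  show "(A - {t}) <#> {\<one>, t} \<subseteq> A"
    using assms by (auto elim!: set_multE)
  show "A \<subseteq> (A - {t}) <#> {\<one>, t}"
  proof
    fix x assume "x \<in> A"
    show "x \<in> (A - {t}) <#> {\<one>, t}"
    proof (cases "x = t")
      case True
      then have "x = \<one> \<otimes> t"
        using assms by simp
      then show ?thesis
        using assms set_multI[of \<one> "A - {t}" t "{\<one>, t}" G] by simp
    next
      case False
      then have "x = x \<otimes> \<one>"
        using assms \<open>x \<in> A\<close> by auto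
      then show ?thesis
        using False \<open>x \<in> A\<close> set_multI[of x "A - {t}" \<one> "{\<one>, t}" G] by simp
    qed
  qed
qed

lemma coatom_set_mult:
  assumes "b \<in> carrier G" "Y \<in> P0" "Y \<noteq> {\<one>}"
  shows "(carrier G - {b}) <#> Y = carrier G"
proof -
  obtain y where y: "y \<in> Y" "y \<noteq> \<one>"
    using assms by auto
  then have "b \<otimes> inv y \<in> carrier G - {b}"
    using assms by auto
  then have "b \<otimes> inv y \<otimes> y \<in> (carrier G - {b}) <#> Y"
    using y(1) by (rule set_multI)
  then have "b \<in> (carrier G - {b}) <#> Y"
    using assms y by (auto simp: m_assoc)
  moreover have "carrier G - {b} \<subseteq> (carrier G - {b}) <#> Y"
    using assms subset_set_mult by auto
  ultimately show ?thesis
    using set_mult_closed[of "carrier G - {b}" Y] assms by auto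
qed

lemma coatom_if_set_mult:
  assumes M: "M \<in> P0" "M \<noteq> carrier G"
    and full: "\<And>Y. Y \<in> P0 \<Longrightarrow> Y \<noteq> {\<one>} \<Longrightarrow> M <#> Y = carrier G"
  obtains b where "b \<in> carrier G" "M = carrier G - {b}"
proof -
  obtain b where b: "b \<in> carrier G" "b \<notin> M"
    using M by auto
  have "b' \<in> M" if b': "b' \<in> carrier G" "b' \<noteq> b" for b'
  proof (rule ccontr)
    assume "b' \<notin> M"
    have "b \<otimes> inv b' \<noteq> \<one>"
      using b b' inv_solve_right'[of \<one> b b'] by auto
    then have "b \<in> M <#> {\<one>, b \<otimes> inv b'}"
      using full[of "{\<one>, b \<otimes> inv b'}"] b b' by auto
    then obtain m y where my: "m \<in> M" "y \<in> {\<one>, b \<otimes> inv b'}" "b = m \<otimes> y"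
      by (rule set_multE)
    then have "m \<in> carrier G"
      using M by auto
    have "m = b \<or> m = b'"
    proof (cases "y = \<one>")
      case True
      then show ?thesis
        using my \<open>m \<in> carrier G\<close> by simp
    next
      case False
      then have "b \<otimes> (m \<otimes> inv b') = b"
        using my b b' \<open>m \<in> carrier G\<close> by (simp add: m_lcomm)
      then have "m \<otimes> inv b' = \<one>"
        using b b' \<open>m \<in> carrier G\<close> by simp
      then show ?thesis
        using b' \<open>m \<in> carrier G\<close> inv_solve_right'[of \<one> m b'] by simp
    qed
    then show False
      using my b \<open>b' \<notin> M\<close> by blast
  qed
  then have "M = carrier G - {b}"
    using M b by auto
  with b that show thesis
    by blast
qed

text \<open>\<open>avoid p A\<close> is the largest \<open>Y\<close> with \<open>p \<notin> A <#> Y\<close>.\<close>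

definition avoid :: "'a \<Rightarrow> 'a set \<Rightarrow> 'a set" where
  "avoid p A = carrier G - (\<lambda>x. p \<otimes> inv x) ` A"

lemma avoid_in_P0:
  assumes "A \<subseteq> carrier G" "p \<in> carrier G" "p \<notin> A"
  shows "avoid p A \<in> P0"
proof -
  have "\<one> \<notin> (\<lambda>x. p \<otimes> inv x) ` A"
  proof
    assume "\<one> \<in> (\<lambda>x. p \<otimes> inv x) ` A"
    then obtain x where x: "x \<in> A" "p \<otimes> inv x = \<one>"
      by auto
    then have "p = x"
      using assms inv_solve_right'[of \<one> p x] by auto
    with x assms show False
      by simp
  qed
  then show ?thesis
    by (simp add: avoid_def)
qed

lemma not_in_set_mult_avoid:
  assumes "A \<subseteq> carrier G" "p \<in> carrier G"
  shows "p \<notin> A <#> avoid p A"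
proof
  assume "p \<in> A <#> avoid p A"
  then obtain x y where xy: "x \<in> A" "y \<in> avoid p A" "p = x \<otimes> y"
    by (rule set_multE)
  have xc: "x \<in> carrier G" and yc: "y \<in> carrier G"
    using xy assms by (auto simp: avoid_def)
  then have "p = y \<otimes> x"
    using xy(3) m_comm[OF xc yc] by simp
  then have "y = p \<otimes> inv x"
    using inv_solve_right[OF yc assms(2) xc] by simp
  with xy(1,2) show False
    by (simp add: avoid_def)
qed

lemma set_mult_avoid:
  assumes A: "A \<subseteq> carrier G" "aperiodic A" and p: "p \<in> carrier G"
  shows "A <#> avoid p A = carrier G - {p}"
proof
  have "avoid p A \<subseteq> carrier G"
    by (auto simp: avoid_def)
  then show "A <#> avoid p A \<subseteq> carrier G - {p}"
    using set_mult_closed[OF A(1)] not_in_set_mult_avoid[OF A(1) p] by blast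
  show "carrier G - {p} \<subseteq> A <#> avoid p A"
  proof
    fix w assume w: "w \<in> carrier G - {p}"
    show "w \<in> A <#> avoid p A"
    proof (rule ccontr)
      assume w_notin: "w \<notin> A <#> avoid p A"
      have "x \<otimes> (p \<otimes> inv w) \<in> A" if x: "x \<in> A" for x
      proof -
        have xc: "x \<in> carrier G"
          using x A by auto
        then have "x \<otimes> (w \<otimes> inv x) = w"
          using w by (simp add: mult_inv_cancel)
        then have "w \<otimes> inv x \<notin> avoid p A"
          using w_notin set_multI[OF x, of "w \<otimes> inv x" "avoid p A" G] by auto
        then obtain x' where x': "x' \<in> A" "w \<otimes> inv x = p \<otimes> inv x'"
          using xc w by (auto simp: avoid_def)
        have x'c: "x' \<in> carrier G"
          using x' A by auto
        have "w \<otimes> x' = p \<otimes> x"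
          using x'(2) xc x'c w p div_eq_div_iff by simp
        then have "x' = x \<otimes> p \<otimes> inv w"
          using xc x'c w p inv_solve_right[of x' "x \<otimes> p" w] by (simp add: m_comm)
        with x' xc w p show ?thesis
          by (simp add: m_assoc)
      qed
      then have "p \<otimes> inv w = \<one>"
        using A p w unfolding aperiodic_def by simp
      then show False
        using p w inv_solve_right'[of \<one> p w] by simp
    qed
  qed
qed

lemma translation_stable_Diff:
  assumes "finite (carrier G)" "Y \<subseteq> carrier G" "s \<in> carrier G" "\<forall>y\<in>Y. y \<otimes> s \<in> Y"
    and "x \<in> carrier G - Y"
  shows "x \<otimes> s \<in> carrier G - Y"
proof -
  have "inj_on (\<lambda>y. y \<otimes> s) Y"
  proof (rule inj_onI)
    fix y z assume yz: "y \<in> Y" "z \<in> Y" "y \<otimes> s = z \<otimes> s"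
    then have "y \<in> carrier G" "z \<in> carrier G"
      using assms(2) by auto
    with yz(3) assms(3) show "y = z"
      by simp
  qed
  moreover have "finite Y"
    using finite_subset[OF assms(2,1)] .
  moreover have "(\<lambda>y. y \<otimes> s) ` Y \<subseteq> Y"
    using assms(4) by auto
  ultimately have "(\<lambda>y. y \<otimes> s) ` Y = Y"
    using endo_inj_surj by blast
  have "x \<otimes> s \<notin> Y"
  proof
    assume "x \<otimes> s \<in> Y"
    then have "x \<otimes> s \<in> (\<lambda>y. y \<otimes> s) ` Y"
      using \<open>(\<lambda>y. y \<otimes> s) ` Y = Y\<close> by simp
    then obtain y where y: "y \<in> Y" "x \<otimes> s = y \<otimes> s"
      by blast
    moreover have "y \<in> carrier G" "x \<in> carrier G"
      using y(1) assms by auto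
    ultimately have "x = y"
      using assms(3) by simp
    with y assms show False
      by simp
  qed
  then show ?thesis
    using assms by simp
qed

lemma aperiodic_avoid:
  assumes fin: "finite (carrier G)" and A: "A \<subseteq> carrier G" "aperiodic A" and p: "p \<in> carrier G"
  shows "aperiodic (avoid p A)"
  unfolding aperiodic_def
proof (intro ballI impI)
  fix s assume s: "s \<in> carrier G" "\<forall>y\<in>avoid p A. y \<otimes> s \<in> avoid p A"
  have compl: "carrier G - avoid p A = (\<lambda>x. p \<otimes> inv x) ` A"
    using A p by (auto simp: avoid_def)
  have "x \<otimes> inv s \<in> A" if x: "x \<in> A" for x
  proof -
    have xc: "x \<in> carrier G"
      using x A by auto
    then have "p \<otimes> inv x \<in> carrier G - avoid p A"
      using compl x by auto
    then have "p \<otimes> inv x \<otimes> s \<in> (\<lambda>x. p \<otimes> inv x) ` A"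
      using translation_stable_Diff[OF fin _ s] compl by (auto simp: avoid_def)
    then obtain x' where x': "x' \<in> A" "p \<otimes> s \<otimes> inv x = p \<otimes> inv x'"
      using xc s p by (auto simp: m_ac)
    have x'c: "x' \<in> carrier G"
      using x' A by auto
    have "p \<otimes> s \<otimes> x' = p \<otimes> x"
      using x'(2) xc x'c s p div_eq_div_iff by simp
    then have "x = s \<otimes> x'"
      using xc x'c s p by (simp add: m_assoc)
    then have "x \<otimes> inv s = x'"
      using x'c s by (simp add: m_assoc mult_inv_cancel)
    with x' show ?thesis
      by simp
  qed
  moreover have "inv s \<in> carrier G"
    using s by simp
  ultimately have "inv s = \<one>"
    using A(2) unfolding aperiodic_def by blast
  then show "s = \<one>"
    using s by simp
qed

text \<open>\<open>fill_le\<close> is defined from the monoid structure alone, so it is invariant under automorphisms;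
  by \<open>fill_le_imp_translate\<close> it forces \<open>B\<close> into a translate of \<open>A\<close>.\<close>

definition fill_le :: "'a set \<Rightarrow> 'a set \<Rightarrow> bool" where
  "fill_le B A \<longleftrightarrow> (\<forall>C\<in>P0. B <#> C = carrier G \<longrightarrow> A <#> C = carrier G)"

lemma fill_le_subset:
  assumes "B \<subseteq> A" "A \<subseteq> carrier G"
  shows "fill_le B A"
  unfolding fill_le_def
proof (intro ballI impI)
  fix C assume "C \<in> P0" "B <#> C = carrier G"
  then show "A <#> C = carrier G"
    using mono_set_mult[OF assms(1), of C C G] set_mult_closed[OF assms(2), of C] by auto
qed

lemma fill_le_imp_translate:
  assumes le: "fill_le B A" and A: "A \<in> P0" "A \<noteq> carrier G" and B: "B \<subseteq> carrier G"
  obtains s where "s \<in> carrier G" "\<forall>y\<in>B. \<exists>x\<in>A. y = x \<otimes> s"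
proof -
  obtain g where g: "g \<in> carrier G" "g \<notin> A"
    using A by auto
  let ?C = "avoid g A"
  have C: "?C \<in> P0"
    using avoid_in_P0 A g by simp
  have "A <#> ?C \<noteq> carrier G"
    using not_in_set_mult_avoid[of A g] A g by auto
  then have "B <#> ?C \<noteq> carrier G"
    using le C unfolding fill_le_def by blast
  moreover have "B <#> ?C \<subseteq> carrier G"
    using set_mult_closed[of B ?C] B C by simp
  ultimately obtain u where u: "u \<in> carrier G" "u \<notin> B <#> ?C"
    by blast
  have "\<exists>x\<in>A. y = x \<otimes> (u \<otimes> inv g)" if y: "y \<in> B" for y
  proof -
    have yc: "y \<in> carrier G"
      using y B by auto
    then have "y \<otimes> (u \<otimes> inv y) = u"
      using u by (simp add: mult_inv_cancel)
    then have "u \<otimes> inv y \<notin> ?C"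
      using u set_multI[OF y, of "u \<otimes> inv y" ?C G] by auto
    then obtain x where x: "x \<in> A" "u \<otimes> inv y = g \<otimes> inv x"
      using u yc by (auto simp: avoid_def)
    have xc: "x \<in> carrier G"
      using x A by auto
    have "u \<otimes> x = g \<otimes> y"
      using x(2) u yc g xc div_eq_div_iff by simp
    then have "y = x \<otimes> u \<otimes> inv g"
      using u yc g xc inv_solve_right[of y "x \<otimes> u" g] by (simp add: m_comm)
    with x xc u g show ?thesis
      by (auto simp: m_assoc)
  qed
  moreover have "u \<otimes> inv g \<in> carrier G"
    using u g by simp
  ultimately show thesis
    using that by blast
qed

lemma fill_le_imp_quotient:
  assumes le: "fill_le B A" and A: "A \<in> P0" "A \<noteq> carrier G" and B: "B \<in> P0" "b \<in> B"
  obtains x y where "x \<in> A" "y \<in> A" "b = x \<otimes> inv y"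
proof -
  obtain s where s: "s \<in> carrier G" "\<forall>y\<in>B. \<exists>x\<in>A. y = x \<otimes> s"
    using fill_le_imp_translate[OF le A] B by auto
  then obtain x y where xy: "x \<in> A" "b = x \<otimes> s" "y \<in> A" "\<one> = y \<otimes> s"
    using B by blast
  moreover have "inv y = s"
    using xy A s inv_equality[of s y] by (auto simp: m_comm)
  ultimately show thesis
    using that by simp
qed

lemma set_mult_involution_pair:
  assumes "t \<in> carrier G" "t \<otimes> t = \<one>"
  shows "{\<one>, t} <#> {\<one>, t} = {\<one>, t}"
proof
  show "{\<one>, t} <#> {\<one>, t} \<subseteq> {\<one>, t}"
    using assms by (auto elim!: set_multE)
  show "{\<one>, t} \<subseteq> {\<one>, t} <#> {\<one>, t}"
    using subset_set_mult[of "{\<one>, t}" "{\<one>, t}"] assms by simp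
qed

lemma fill_le_involution_pair:
  assumes t: "t \<in> carrier G" "t \<otimes> t = \<one>" and E: "{\<one>, t} \<noteq> carrier G"
    and S: "S \<in> P0" "fill_le S {\<one>, t}"
  shows "S \<subseteq> {\<one>, t}"
proof
  fix s assume "s \<in> S"
  moreover have "{\<one>, t} \<in> P0"
    using t by simp
  ultimately obtain x y where "x \<in> {\<one>, t}" "y \<in> {\<one>, t}" "s = x \<otimes> inv y"
    using fill_le_imp_quotient[OF S(2) _ E S(1)] by blast
  then show "s \<in> {\<one>, t}"
    using t involution_inv[OF t] by auto
qed

lemma quotient_of_triple:
  assumes t: "t \<in> carrier G" "t \<otimes> t = \<one>" and k: "k \<in> carrier G" "k \<otimes> k = \<one>"
    and c: "c \<in> carrier G" and xy: "x \<in> {\<one>, t, c}" "y \<in> {\<one>, t, c}" "k = x \<otimes> inv y"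
  shows "k \<in> {\<one>, t} \<or> c \<in> {k, t \<otimes> k}"
proof -
  have inv: "inv t = t" "inv k = k"
    using involution_inv t k by auto
  have "k \<in> {\<one>, t, c, inv c, t \<otimes> inv c, c \<otimes> t}"
    using xy inv t c by auto
  moreover have "c = k" if "k = inv c"
    using that inv c by simp
  moreover have "c = t \<otimes> k" if "k = t \<otimes> inv c"
  proof -
    have "t = k \<otimes> c"
      using that t k c inv_solve_right[of k t c] by simp
    then have "t \<otimes> k = c \<otimes> (k \<otimes> k)"
      using k c by (simp add: m_ac)
    then show ?thesis
      using k c by simp
  qed
  moreover have "c = t \<otimes> k" if "k = c \<otimes> t"
    using that t c by (simp add: m_lcomm)
  ultimately show ?thesis
    by blast
qed

section \<open>The canonical embedding of the automorphism group\<close>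

text \<open>The paper's \<open>F\<^sub>h\<close>, restricted to \<open>P0\<close> because \<^const>\<open>AutoGroup\<close> consists of
  extensional maps.\<close>

definition image_map :: "('a \<Rightarrow> 'a) \<Rightarrow> 'a set \<Rightarrow> 'a set" where
  "image_map h = (\<lambda>W\<in>P0. h ` W)"

lemma autoD:
  assumes "h \<in> auto G"
  shows "h \<in> hom G G" "bij_betw h (carrier G) (carrier G)" "h \<one> = \<one>"
  using assms hom_one[OF _ is_group is_group] unfolding auto_def Bij_def by blast+

lemma image_in_P0_iff:
  assumes h: "h \<in> auto G" and W: "W \<subseteq> carrier G"
  shows "h ` W \<in> P0 \<longleftrightarrow> W \<in> P0"
proof -
  note h' = autoD[OF h]
  have "h ` W \<subseteq> carrier G"
    using h'(2) W bij_betw_imp_surj_on by blast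
  moreover have "\<one> \<in> h ` W \<longleftrightarrow> \<one> \<in> W"
    using h'(3) inj_on_image_mem_iff[OF bij_betw_imp_inj_on[OF h'(2)] one_closed W] by simp
  ultimately show ?thesis
    using W by simp
qed

lemma image_P0:
  assumes h: "h \<in> auto G"
  shows "image h ` P0 = P0"
proof (intro equalityI subsetI)
  fix V assume "V \<in> image h ` P0"
  then obtain W where "V = h ` W" "W \<in> P0"
    by (rule imageE)
  then show "V \<in> P0"
    using image_in_P0_iff[OF h, of W] by simp
next
  fix W assume W: "W \<in> P0"
  then have "W \<in> image h ` Pow (carrier G)"
    using bij_betw_imp_surj_on[OF bij_betw_image_Pow[OF autoD(2)[OF h]]] by simp
  then obtain V where V: "W = h ` V" "V \<in> Pow (carrier G)"
    by (rule imageE)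
  then have "V \<in> P0"
    using W image_in_P0_iff[OF h] by simp
  then show "W \<in> image h ` P0"
    using V(1) by (rule rev_image_eqI)
qed

lemma image_map_auto:
  assumes h: "h \<in> auto G"
  shows "image_map h \<in> auto (reduced_power_monoid G)"
proof -
  note h' = autoD[OF h]
  have "P0 \<subseteq> Pow (carrier G)"
    by auto
  then have "bij_betw (image h) P0 P0"
    using bij_betw_subset[OF bij_betw_image_Pow[OF h'(2)] _ image_P0[OF h]] by simp
  then have bij: "bij_betw (image_map h) P0 P0"
    by (simp add: image_map_def)
  have "image_map h \<in> hom (reduced_power_monoid G) (reduced_power_monoid G)"
  proof (rule homI)
    fix W assume "W \<in> carrier (reduced_power_monoid G)"
    then show "image_map h W \<in> carrier (reduced_power_monoid G)"
      using bij_betw_apply[OF bij] by (simp add: carrier_reduced_power_monoid)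
  next
    fix V W assume "V \<in> carrier (reduced_power_monoid G)" "W \<in> carrier (reduced_power_monoid G)"
    then have VW: "V \<in> P0" "W \<in> P0"
      by (simp_all add: carrier_reduced_power_monoid)
    then have "image_map h (V <#> W) = image_map h V <#> image_map h W"
      using set_mult_hom[OF h'(1)] set_mult_in_P0[OF VW] by (simp add: image_map_def)
    then show "image_map h (V \<otimes>\<^bsub>reduced_power_monoid G\<^esub> W) =
        image_map h V \<otimes>\<^bsub>reduced_power_monoid G\<^esub> image_map h W"
      by (simp add: mult_reduced_power_monoid)
  qed
  with bij show ?thesis
    by (simp add: auto_def Bij_def image_map_def carrier_reduced_power_monoid)
qed

lemma image_map_compose:
  assumes "h \<in> auto G" "k \<in> auto G"
  shows "image_map (compose (carrier G) h k) = compose P0 (image_map h) (image_map k)"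
proof
  fix W
  show "image_map (compose (carrier G) h k) W = compose P0 (image_map h) (image_map k) W"
  proof (cases "W \<in> P0")
    case True
    then have "k ` W \<in> P0"
      using image_in_P0_iff[OF assms(2)] by simp
    have "compose (carrier G) h k ` W = (\<lambda>x. h (k x)) ` W"
      using True by (intro image_cong) (auto simp: compose_def)
    then have "compose (carrier G) h k ` W = h ` k ` W"
      by (simp add: image_image)
    with True \<open>k ` W \<in> P0\<close> show ?thesis
      by (simp add: image_map_def compose_def)
  next
    case False
    then show ?thesis
      by (simp only: image_map_def compose_def[of P0] restrict_apply if_not_P if_False)
  qed
qed

lemma image_map_hom:
  "image_map \<in> hom (AutoGroup G) (AutoGroup (reduced_power_monoid G))"
proof (rule homI)
  fix h assume "h \<in> carrier (AutoGroup G)"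
  then show "image_map h \<in> carrier (AutoGroup (reduced_power_monoid G))"
    using image_map_auto by (simp add: carrier_AutoGroup)
next
  fix h k assume "h \<in> carrier (AutoGroup G)" "k \<in> carrier (AutoGroup G)"
  then have hk: "h \<in> auto G" "k \<in> auto G"
    by (simp_all add: carrier_AutoGroup)
  then show "image_map (h \<otimes>\<^bsub>AutoGroup G\<^esub> k) =
      image_map h \<otimes>\<^bsub>AutoGroup (reduced_power_monoid G)\<^esub> image_map k"
    using mult_AutoGroup[OF hk] mult_AutoGroup[OF image_map_auto[OF hk(1)] image_map_auto[OF hk(2)]]
      image_map_compose[OF hk] by (simp add: carrier_reduced_power_monoid)
qed

lemma inj_on_image_map: "inj_on image_map (auto G)"
proof (rule inj_onI)
  fix h k assume hk: "h \<in> auto G" "k \<in> auto G" "image_map h = image_map k"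
  note h = autoD[OF hk(1)] and k = autoD[OF hk(2)]
  show "h = k"
  proof (rule extensionalityI[of h "carrier G" k])
    show "h \<in> extensional (carrier G)" "k \<in> extensional (carrier G)"
      using hk(1,2) by (simp_all add: auto_def Bij_def)
  next
    fix x assume x: "x \<in> carrier G"
    show "h x = k x"
    proof (cases "x = \<one>")
      case True
      then show ?thesis
        using h(3) k(3) by simp
    next
      case False
      have "{\<one>, x} \<in> P0"
        using x by simp
      then have "{\<one>, h x} = {\<one>, k x}"
        using fun_cong[OF hk(3), of "{\<one>, x}"] h(3) k(3) by (simp add: image_map_def)
      moreover have "h x \<noteq> h \<one>"
        using inj_on_eq_iff[OF bij_betw_imp_inj_on[OF h(2)] x one_closed] False by simp
      ultimately show ?thesis
        using h(3) by (simp add: doubleton_eq_iff)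
    qed
  qed
qed

end

section \<open>Automorphisms of the reduced power monoid\<close>

locale power_monoid_automorphism = comm_group G for G (structure) +
  fixes f :: "'a set \<Rightarrow> 'a set"
  assumes finite_carrier: "finite (carrier G)"
    and f_iso: "f \<in> iso (reduced_power_monoid G) (reduced_power_monoid G)"
begin

lemma f_bij: "bij_betw f P0 P0"
  using f_iso unfolding iso_def carrier_reduced_power_monoid by blast

lemma f_P0: "A \<in> P0 \<Longrightarrow> f A \<in> P0"
  by (rule bij_betw_apply[OF f_bij])

lemma f_mult: "A \<in> P0 \<Longrightarrow> B \<in> P0 \<Longrightarrow> f (A <#> B) = f A <#> f B"
  using hom_mult[of f "reduced_power_monoid G" "reduced_power_monoid G" A B] f_iso
  unfolding iso_def carrier_reduced_power_monoid mult_reduced_power_monoid by blast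

lemma f_eq_iff:
  assumes "A \<in> P0" "B \<in> P0"
  shows "f A = f B \<longleftrightarrow> A = B"
  using inj_on_eq_iff[OF bij_betw_imp_inj_on[OF f_bij] assms] .

lemma f_surj:
  assumes "B \<in> P0"
  obtains A where "A \<in> P0" "f A = B"
proof -
  have "B \<in> f ` P0"
    using assms by (simp only: bij_betw_imp_surj_on[OF f_bij])
  then show thesis
    using that by blast
qed

lemma f_carrier: "f (carrier G) = carrier G"
proof -
  obtain A where A: "A \<in> P0" "f A = carrier G"
    using f_surj[OF carrier_in_P0] by blast
  have "f (carrier G) = f (A <#> carrier G)"
    using set_mult_carrier[OF A(1)] by simp
  also have "\<dots> = carrier G <#> f (carrier G)"
    using f_mult[OF A(1) carrier_in_P0] A(2) by simp
  also have "\<dots> = carrier G"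
    using set_mult_carrier[OF f_P0[OF carrier_in_P0]] set_mult_comm[of "carrier G" "f (carrier G)"]
      f_P0[OF carrier_in_P0] by simp
  finally show ?thesis .
qed

lemma f_one: "f {\<one>} = {\<one>}"
proof -
  obtain A where A: "A \<in> P0" "f A = {\<one>}"
    using f_surj[of "{\<one>}"] by auto
  have "f A = f ({\<one>} <#> A)"
    using set_mult_one_left A(1) by simp
  also have "\<dots> = f {\<one>} <#> {\<one>}"
    using f_mult[of "{\<one>}" A] A by simp
  also have "\<dots> = f {\<one>}"
    using set_mult_one_right f_P0[of "{\<one>}"] by simp
  finally show ?thesis
    using A(2) by simp
qed

lemma f_coatom:
  assumes "b \<in> carrier G" "b \<noteq> \<one>"
  obtains c where "c \<in> carrier G" "f (carrier G - {b}) = carrier G - {c}"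
proof -
  let ?M = "carrier G - {b}"
  have M: "?M \<in> P0" "?M \<noteq> carrier G"
    using assms by auto
  have "f ?M <#> Y = carrier G" if Y: "Y \<in> P0" "Y \<noteq> {\<one>}" for Y
  proof -
    obtain Y0 where Y0: "Y0 \<in> P0" "f Y0 = Y"
      using f_surj[OF Y(1)] by blast
    then have "Y0 \<noteq> {\<one>}"
      using Y f_one by auto
    then have "f (?M <#> Y0) = carrier G"
      using coatom_set_mult[OF assms(1) Y0(1)] f_carrier by simp
    then show ?thesis
      using f_mult[OF M(1) Y0(1)] Y0(2) by simp
  qed
  moreover have "f ?M \<noteq> carrier G"
    using f_eq_iff[OF M(1) carrier_in_P0] f_carrier M(2) by simp
  ultimately show thesis
    using coatom_if_set_mult[OF f_P0[OF M(1)]] that by blast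
qed

lemma f_preserves_aperiodic:
  assumes A: "A \<in> P0" "aperiodic A"
  shows "aperiodic (f A)"
proof (rule ccontr)
  assume "\<not> aperiodic (f A)"
  then obtain Z where Z: "Z \<in> P0" "Z \<noteq> {\<one>}" "f A <#> Z = f A"
    using iffD1[OF not_aperiodic_iff[OF f_P0[OF A(1)]]] by blast
  obtain Z0 where Z0: "Z0 \<in> P0" "f Z0 = Z"
    using f_surj[OF Z(1)] by blast
  have "f (A <#> Z0) = f A"
    using f_mult[OF A(1) Z0(1)] Z0(2) Z(3) by simp
  then have "A <#> Z0 = A"
    using f_eq_iff[OF set_mult_in_P0[OF A(1) Z0(1)] A(1)] by simp
  moreover have "Z0 \<noteq> {\<one>}"
    using Z Z0 f_one by auto
  ultimately show False
    using iffD2[OF not_aperiodic_iff[OF A(1)]] Z0(1) A(2) by blast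
qed

lemma fill_le_f_iff:
  assumes A: "A \<in> P0" and B: "B \<in> P0"
  shows "fill_le (f B) (f A) \<longleftrightarrow> fill_le B A"
proof -
  have full_iff: "f S <#> f C = carrier G \<longleftrightarrow> S <#> C = carrier G" if "S \<in> P0" "C \<in> P0" for S C
    using f_mult[OF that] f_eq_iff[OF set_mult_in_P0[OF that] carrier_in_P0] f_carrier by simp
  have "fill_le (f B) (f A) \<longleftrightarrow> (\<forall>C\<in>f ` P0. f B <#> C = carrier G \<longrightarrow> f A <#> C = carrier G)"
    using f_bij by (simp add: fill_le_def bij_betw_def)
  also have "\<dots> \<longleftrightarrow> fill_le B A"
    using full_iff A B by (simp add: fill_le_def)
  finally show ?thesis .
qed

text \<open>\<open>f\<close> permutes the coatoms \<open>carrier G - {b}\<close>, \<open>b \<noteq> \<one>\<close> (\<open>f_coatom\<close>); \<open>\<sigma>\<close> is the induced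
  permutation of \<open>carrier G\<close>, with \<open>\<sigma> \<one> = \<one>\<close> by convention.\<close>

definition \<sigma> :: "'a \<Rightarrow> 'a" where
  "\<sigma> b = (if b = \<one> then \<one> else the_elem (carrier G - f (carrier G - {b})))"

lemma f_coatom_eq:
  assumes "b \<in> carrier G" "b \<noteq> \<one>"
  shows "f (carrier G - {b}) = carrier G - {\<sigma> b}" "\<sigma> b \<in> carrier G" "\<sigma> b \<noteq> \<one>"
proof -
  obtain c where c: "c \<in> carrier G" "f (carrier G - {b}) = carrier G - {c}"
    using f_coatom[OF assms] by blast
  then have "carrier G - f (carrier G - {b}) = {c}"
    by auto
  then have "\<sigma> b = c"
    using assms by (simp add: \<sigma>_def)
  moreover have "\<one> \<in> f (carrier G - {b})"
    using f_P0[of "carrier G - {b}"] assms by auto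
  ultimately show "f (carrier G - {b}) = carrier G - {\<sigma> b}" "\<sigma> b \<in> carrier G" "\<sigma> b \<noteq> \<one>"
    using c by auto
qed

lemma \<sigma>_one [simp]: "\<sigma> \<one> = \<one>"
  by (simp add: \<sigma>_def)

lemma \<sigma>_closed: "b \<in> carrier G \<Longrightarrow> \<sigma> b \<in> carrier G"
  using f_coatom_eq(2) by (cases "b = \<one>") auto

lemma \<sigma>_eq_one_iff: "b \<in> carrier G \<Longrightarrow> \<sigma> b = \<one> \<longleftrightarrow> b = \<one>"
  using f_coatom_eq(3) by (cases "b = \<one>") auto

lemma inj_on_\<sigma>: "inj_on \<sigma> (carrier G)"
proof (rule inj_onI)
  fix x y assume xy: "x \<in> carrier G" "y \<in> carrier G" "\<sigma> x = \<sigma> y"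
  show "x = y"
  proof (cases "x = \<one> \<or> y = \<one>")
    case True
    moreover have "x = \<one> \<longleftrightarrow> y = \<one>"
      using xy \<sigma>_eq_one_iff by metis
    ultimately show ?thesis
      by blast
  next
    case False
    then have "f (carrier G - {x}) = f (carrier G - {y})"
      using xy f_coatom_eq(1) by simp
    then have "carrier G - {x} = carrier G - {y}"
      using f_eq_iff False xy by auto
    then show ?thesis
      using xy by auto
  qed
qed

lemma bij_\<sigma>: "bij_betw \<sigma> (carrier G) (carrier G)"
proof -
  have "\<sigma> ` carrier G \<subseteq> carrier G"
    using \<sigma>_closed by auto
  then show ?thesis
    using endo_inj_surj[OF finite_carrier _ inj_on_\<sigma>] inj_on_\<sigma> by (simp add: bij_betw_def)
qed

lemma \<sigma>_mem_f_iff: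
  assumes A: "A \<in> P0" "aperiodic A" and b: "b \<in> carrier G" "b \<noteq> \<one>"
  shows "\<sigma> b \<in> f A \<longleftrightarrow> b \<in> A"
proof
  assume "\<sigma> b \<in> f A"
  show "b \<in> A"
  proof (rule ccontr)
    assume "b \<notin> A"
    then have Y: "avoid b A \<in> P0"
      using avoid_in_P0 A(1) b by simp
    have "f A <#> f (avoid b A) = carrier G - {\<sigma> b}"
      using f_mult[OF A(1) Y] set_mult_avoid[of A b] A b f_coatom_eq(1)[OF b] by simp
    moreover have "f A \<subseteq> f A <#> f (avoid b A)"
      using subset_set_mult f_P0[OF A(1)] f_P0[OF Y] by simp
    ultimately show False
      using \<open>\<sigma> b \<in> f A\<close> by auto
  qed
next
  assume "b \<in> A"
  show "\<sigma> b \<in> f A"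
  proof (rule ccontr)
    assume "\<sigma> b \<notin> f A"
    then have "avoid (\<sigma> b) (f A) \<in> P0"
      using avoid_in_P0 f_P0[OF A(1)] \<sigma>_closed[OF b(1)] by simp
    then obtain Y where Y: "Y \<in> P0" "f Y = avoid (\<sigma> b) (f A)"
      by (rule f_surj)
    have "f (A <#> Y) = carrier G - {\<sigma> b}"
      using f_mult[OF A(1) Y(1)] Y(2) set_mult_avoid[of "f A" "\<sigma> b"] f_P0[OF A(1)]
        f_preserves_aperiodic[OF A] \<sigma>_closed[OF b(1)] by simp
    then have "A <#> Y = carrier G - {b}"
      using f_eq_iff[OF set_mult_in_P0[OF A(1) Y(1)], of "carrier G - {b}"] f_coatom_eq(1)[OF b] b
      by auto
    moreover have "A \<subseteq> A <#> Y"
      using subset_set_mult A(1) Y(1) by simp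
    ultimately show False
      using \<open>b \<in> A\<close> by auto
  qed
qed

lemma f_eq_image_if_aperiodic:
  assumes A: "A \<in> P0" "aperiodic A"
  shows "f A = \<sigma> ` A"
proof (intro equalityI subsetI)
  fix w assume w: "w \<in> f A"
  then have "w \<in> \<sigma> ` carrier G"
    using f_P0[OF A(1)] bij_betw_imp_surj_on[OF bij_\<sigma>] by auto
  then obtain b where b: "b \<in> carrier G" "w = \<sigma> b"
    by blast
  moreover have "\<one> \<in> \<sigma> ` A"
    using image_eqI[of \<one> \<sigma> \<one> A] A(1) by simp
  ultimately show "w \<in> \<sigma> ` A"
    using \<sigma>_mem_f_iff[OF A, of b] w by (cases "b = \<one>") auto
next
  fix w assume "w \<in> \<sigma> ` A"
  then obtain b where b: "b \<in> A" "w = \<sigma> b"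
    by blast
  then show "w \<in> f A"
    using \<sigma>_mem_f_iff[OF A, of b] f_P0[OF A(1)] A(1) by (cases "b = \<one>") auto
qed

lemma \<sigma>_quotient_mem:
  assumes A: "A \<in> P0" "aperiodic A" and p: "p \<in> carrier G" "p \<notin> A" and a: "a \<in> A"
  shows "\<sigma> p \<otimes> inv (\<sigma> a) \<in> \<sigma> ` (\<lambda>x. p \<otimes> inv x) ` A"
proof -
  let ?Y = "avoid p A"
  have Y: "?Y \<in> P0" "aperiodic ?Y"
    using avoid_in_P0 aperiodic_avoid[OF finite_carrier] A p by auto
  have "p \<noteq> \<one>"
    using A p by auto
  then have "\<sigma> ` A <#> \<sigma> ` ?Y = carrier G - {\<sigma> p}"
    using f_mult[OF A(1) Y(1)] f_eq_image_if_aperiodic[OF A] f_eq_image_if_aperiodic[OF Y] set_mult_avoid[of A p]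
      f_coatom_eq(1)[OF p(1)] A p by simp
  moreover have "\<sigma> a \<in> \<sigma> ` A" "\<sigma> a \<in> carrier G"
    using a A \<sigma>_closed by auto
  moreover have "\<sigma> a \<otimes> (\<sigma> p \<otimes> inv (\<sigma> a)) = \<sigma> p"
    using \<sigma>_closed[OF p(1)] \<open>\<sigma> a \<in> carrier G\<close> by (simp add: mult_inv_cancel)
  ultimately have "\<sigma> p \<otimes> inv (\<sigma> a) \<notin> \<sigma> ` ?Y"
    using set_multI[of "\<sigma> a" "\<sigma> ` A" "\<sigma> p \<otimes> inv (\<sigma> a)" "\<sigma> ` ?Y" G] by auto
  moreover have "\<sigma> ` ?Y = \<sigma> ` carrier G - \<sigma> ` (\<lambda>x. p \<otimes> inv x) ` A"
    unfolding avoid_def by (rule inj_on_image_set_diff[OF inj_on_\<sigma>]) (use A p in auto)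
  then have "\<sigma> ` ?Y = carrier G - \<sigma> ` (\<lambda>x. p \<otimes> inv x) ` A"
    using bij_betw_imp_surj_on[OF bij_\<sigma>] by simp
  ultimately show ?thesis
    using \<sigma>_closed[OF p(1)] \<open>\<sigma> a \<in> carrier G\<close> by blast
qed

lemma \<sigma>_mult_inv_of_ne:
  assumes a: "a \<in> carrier G" "a \<otimes> a \<noteq> \<one>" and p: "p \<in> carrier G" "p \<noteq> \<one>" "p \<noteq> a"
  shows "\<sigma> (p \<otimes> inv a) = \<sigma> p \<otimes> inv (\<sigma> a)"
proof -
  have "(\<lambda>x. p \<otimes> inv x) ` {\<one>, a} = {p, p \<otimes> inv a}"
    using p by simp
  then have "\<sigma> p \<otimes> inv (\<sigma> a) \<in> {\<sigma> p, \<sigma> (p \<otimes> inv a)}"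
    using \<sigma>_quotient_mem[of "{\<one>, a}" p a] aperiodic_pair[OF a] a p by simp
  moreover have "\<sigma> a \<noteq> \<one>"
    using \<sigma>_eq_one_iff a by auto
  then have "\<sigma> p \<otimes> inv (\<sigma> a) \<noteq> \<sigma> p"
    using \<sigma>_closed a p by simp
  ultimately show ?thesis
    by auto
qed

lemma \<sigma>_mult_of_square_ne_one:
  assumes a: "a \<in> carrier G" "a \<otimes> a \<noteq> \<one>" and p: "p \<in> carrier G"
  shows "\<sigma> (p \<otimes> a) = \<sigma> p \<otimes> \<sigma> a"
proof -
  have a1: "a \<noteq> \<one>" "a \<noteq> inv a"
    using a(2) r_inv[OF a(1)] by (metis l_one one_closed, metis)
  have ia: "inv a \<in> carrier G" "inv a \<otimes> inv a \<noteq> \<one>"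
    using a by (auto simp: inv_mult[symmetric])
  have "\<sigma> a = \<sigma> (a \<otimes> a) \<otimes> inv (\<sigma> a)"
    using \<sigma>_mult_inv_of_ne[OF a, of "a \<otimes> a"] a a1 by (simp add: m_assoc)
  then have sq: "\<sigma> (a \<otimes> a) = \<sigma> a \<otimes> \<sigma> a"
    using a \<sigma>_closed inv_solve_right[of "\<sigma> a" "\<sigma> (a \<otimes> a)" "\<sigma> a"] by simp
  have "\<sigma> (a \<otimes> a) = \<sigma> a \<otimes> inv (\<sigma> (inv a))"
    using \<sigma>_mult_inv_of_ne[OF ia a(1) a1] a by simp
  then have inv: "inv (\<sigma> (inv a)) = \<sigma> a"
    using sq a \<sigma>_closed ia by simp
  show ?thesis
  proof (cases "p = \<one> \<or> p = inv a")
    case True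
    have "\<sigma> (inv a) \<otimes> \<sigma> a = \<one>"
      using inv[symmetric] \<sigma>_closed[OF ia(1)] by simp
    with True show ?thesis
      using a \<sigma>_closed[OF a(1)] by (elim disjE) simp_all
  next
    case False
    then show ?thesis
      using \<sigma>_mult_inv_of_ne[OF ia p] inv a by simp
  qed
qed

lemma \<sigma>_mult_exponent_2:
  assumes exp2: "\<And>x. x \<in> carrier G \<Longrightarrow> x \<otimes> x = \<one>"
    and a: "a \<in> carrier G" "a \<noteq> \<one>" and p: "p \<in> carrier G" "p \<noteq> \<one>" "p \<noteq> a"
  shows "\<sigma> (p \<otimes> a) = \<sigma> p \<otimes> \<sigma> a"
proof -
  let ?c = "p \<otimes> a"
  have inv_id: "inv x = x" if "x \<in> carrier G" for x
    using involution_inv exp2 that by blast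
  have "?c \<noteq> \<one>"
    using a p inv_equality[of p a] inv_id by auto
  moreover have "?c \<noteq> a" "?c \<noteq> p"
    using a p by auto
  moreover have "p \<otimes> inv ?c = a"
    using a p inv_id exp2 by (simp add: m_assoc[symmetric])
  ultimately have "(\<lambda>x. p \<otimes> inv x) ` {\<one>, a, ?c} = {p, ?c, a}" "p \<notin> {\<one>, a, ?c}"
    using a p inv_id by auto
  then have "\<sigma> p \<otimes> inv (\<sigma> a) \<in> {\<sigma> p, \<sigma> ?c, \<sigma> a}"
    using \<sigma>_quotient_mem[of "{\<one>, a, ?c}" p a] aperiodic_triple[OF a exp2 _ \<open>?c \<noteq> \<one>\<close> \<open>?c \<noteq> a\<close>]
      a p by simp
  moreover have "\<sigma> a \<noteq> \<one>" "\<sigma> p \<noteq> \<one>"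
    using \<sigma>_eq_one_iff a p by auto
  ultimately show ?thesis
    using \<sigma>_closed a p inv_id[of "\<sigma> a"] by auto
qed

lemma \<sigma>_mult:
  assumes x: "x \<in> carrier G" and y: "y \<in> carrier G"
  shows "\<sigma> (x \<otimes> y) = \<sigma> x \<otimes> \<sigma> y"
proof (cases "\<forall>z\<in>carrier G. z \<otimes> z = \<one>")
  case True
  consider "x = \<one>" | "y = \<one>" | "x = y" | "x \<noteq> \<one>" "y \<noteq> \<one>" "x \<noteq> y"
    by blast
  then show ?thesis
  proof cases
    case 3
    then show ?thesis
      using True x \<sigma>_closed[OF x] by simp
  next
    case 4
    then show ?thesis
      using \<sigma>_mult_exponent_2[of y x] True x y by blast
  qed (use x y \<sigma>_closed in simp_all)
next
  case False
  then obtain a where a: "a \<in> carrier G" "a \<otimes> a \<noteq> \<one>"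
    by blast
  show ?thesis
  proof (cases "y \<otimes> y = \<one>")
    case False
    then show ?thesis
      using \<sigma>_mult_of_square_ne_one x y by blast
  next
    case True
    let ?b = "y \<otimes> a"
    have b: "?b \<in> carrier G" "?b \<otimes> ?b \<noteq> \<one>"
      using a y True by (simp_all add: m_ac)
    have "\<sigma> (x \<otimes> y) \<otimes> \<sigma> a = \<sigma> (x \<otimes> ?b)"
      using \<sigma>_mult_of_square_ne_one[OF a, of "x \<otimes> y"] x y a by (simp add: m_assoc)
    also have "\<dots> = \<sigma> x \<otimes> \<sigma> y \<otimes> \<sigma> a"
      using \<sigma>_mult_of_square_ne_one[OF b x] \<sigma>_mult_of_square_ne_one[OF a y] x y a \<sigma>_closed
      by (simp add: m_assoc)
    finally show ?thesis
      using x y a \<sigma>_closed by simp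
  qed
qed

lemma \<sigma>_hom: "\<sigma> \<in> hom G G"
  by (rule homI) (simp_all add: \<sigma>_closed \<sigma>_mult)

sublocale \<sigma>: group_hom G G \<sigma>
  unfolding group_hom_def group_hom_axioms_def using is_group \<sigma>_hom by blast

lemma f_involution_pairE:
  assumes t: "t \<in> carrier G" "t \<noteq> \<one>" "t \<otimes> t = \<one>" and E: "{\<one>, t} \<noteq> carrier G"
  obtains k where "f {\<one>, t} = {\<one>, k}" "k \<in> carrier G" "k \<noteq> \<one>" "k \<otimes> k = \<one>"
proof -
  let ?E = "{\<one>, t}"
  have E0: "?E \<in> P0"
    using t by simp
  have "f ?E \<noteq> {\<one>}"
    using f_one f_eq_iff[OF E0, of "{\<one>}"] t(2) by auto
  then obtain k where k: "k \<in> f ?E" "k \<noteq> \<one>"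
    using f_P0[OF E0] by auto
  have K: "{\<one>, k} \<in> P0" "{\<one>, k} \<subseteq> f ?E"
    using f_P0[OF E0] k by auto
  then obtain Y where Y: "Y \<in> P0" "f Y = {\<one>, k}"
    using f_surj by blast
  have "fill_le Y ?E"
    using fill_le_f_iff[OF E0 Y(1)] fill_le_subset[OF K(2)] f_P0[OF E0] Y(2) by simp
  then have "Y = {\<one>} \<or> Y = ?E"
    using fill_le_involution_pair[OF t(1,3) E Y(1)] Y(1) by auto
  then have fE: "f ?E = {\<one>, k}"
    using Y(2) f_one k(2) by auto
  have kc: "k \<in> carrier G"
    using k(1) f_P0[OF E0] by auto
  have "f ?E <#> f ?E = f ?E"
    using f_mult[OF E0 E0] set_mult_involution_pair[OF t(1,3)] by simp
  then have "k \<otimes> k \<in> {\<one>, k}"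
    using set_multI[OF k(1) k(1), of G] fE by simp
  then have "k \<otimes> k = \<one>"
    using kc k(2) by auto
  with fE kc k(2) show thesis
    using that by blast
qed

lemma involution_eq_if_f_pair:
  assumes not_Klein4: "\<not> G \<cong> Klein4"
    and t: "t \<in> carrier G" "t \<noteq> \<one>" "t \<otimes> t = \<one>"
    and k: "k \<in> carrier G" "k \<noteq> \<one>" "k \<otimes> k = \<one>"
    and fE: "f {\<one>, t} = {\<one>, \<sigma> k}"
  shows "k = t"
proof (rule ccontr)
  let ?E = "{\<one>, t}"
  have E: "?E \<in> P0"
    using t by simp
  assume "k \<noteq> t"
  then have "t \<noteq> k"
    by simp
  \<comment> \<open>The only place where the Klein four-group has to be excluded.\<close>
  then obtain c where c: "c \<in> carrier G" "c \<notin> {\<one>, t, k, t \<otimes> k}"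
    using exists_not_in_four_subgroup[OF finite_carrier not_Klein4 t k] by blast
  let ?A = "{\<one>, t, c}"
  have A: "?A \<in> P0" "aperiodic ?A"
    using aperiodic_triple[OF t] t c by auto
  have "k \<notin> ?A"
    using k \<open>k \<noteq> t\<close> c by auto
  then have "f ?A \<noteq> carrier G"
    using f_eq_iff[OF A(1) carrier_in_P0] f_carrier k(1) by auto
  moreover have "fill_le (f ?E) (f ?A)"
    using fill_le_f_iff[OF A(1) E] fill_le_subset[of ?E ?A] A(1) by auto
  ultimately obtain x y where "x \<in> f ?A" "y \<in> f ?A" "\<sigma> k = x \<otimes> inv y"
    using fill_le_imp_quotient[OF _ f_P0[OF A(1)] _ f_P0[OF E]] fE by blast
  then have "x \<in> \<sigma> ` ?A" "y \<in> \<sigma> ` ?A" "\<sigma> k = x \<otimes> inv y"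
    by (simp_all only: f_eq_image_if_aperiodic[OF A])
  then obtain x0 y0 where xy0: "x0 \<in> ?A" "y0 \<in> ?A" "\<sigma> k = \<sigma> x0 \<otimes> inv (\<sigma> y0)"
    by blast
  then have "x0 \<in> carrier G" "y0 \<in> carrier G"
    using A(1) by auto
  then have "\<sigma> k = \<sigma> (x0 \<otimes> inv y0)"
    using xy0(3) by simp
  then have "k = x0 \<otimes> inv y0"
    using inj_on_\<sigma> k(1) \<open>x0 \<in> carrier G\<close> \<open>y0 \<in> carrier G\<close> unfolding inj_on_def by blast
  then show False
    using quotient_of_triple[OF t(1,3) k(1,3) c(1) xy0(1,2)] \<open>k \<noteq> t\<close> k c by auto
qed

lemma f_involution_pair:
  assumes not_Klein4: "\<not> G \<cong> Klein4" and t: "t \<in> carrier G" "t \<noteq> \<one>" "t \<otimes> t = \<one>"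
  shows "f {\<one>, t} = {\<one>, \<sigma> t}"
proof (cases "{\<one>, t} = carrier G")
  case True
  then have "\<sigma> t = t"
    using \<sigma>_closed[OF t(1)] \<sigma>_eq_one_iff[OF t(1)] t(2) by auto
  with True show ?thesis
    using f_carrier by simp
next
  case False
  obtain k where k: "f {\<one>, t} = {\<one>, k}" "k \<in> carrier G" "k \<noteq> \<one>" "k \<otimes> k = \<one>"
    using f_involution_pairE[OF t False] by blast
  have "k \<in> \<sigma> ` carrier G"
    using k(2) bij_betw_imp_surj_on[OF bij_\<sigma>] by simp
  then obtain k0 where k0: "k0 \<in> carrier G" "\<sigma> k0 = k"
    by blast
  have "k0 \<noteq> \<one>" "k0 \<otimes> k0 = \<one>"
    using k0 k(3,4) \<sigma>_eq_one_iff[of "k0 \<otimes> k0"] by auto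
  then have "k0 = t"
    using involution_eq_if_f_pair[OF not_Klein4 t k0(1)] k(1) k0(2) by simp
  then show ?thesis
    using k(1) k0(2) by simp
qed

lemma f_pair:
  assumes not_Klein4: "\<not> G \<cong> Klein4" and t: "t \<in> carrier G" "t \<noteq> \<one>"
  shows "f {\<one>, t} = \<sigma> ` {\<one>, t}"
proof (cases "t \<otimes> t = \<one>")
  case True
  then show ?thesis
    using f_involution_pair[OF not_Klein4 t True] by simp
next
  case False
  have "{\<one>, t} \<in> P0"
    using t by simp
  then show ?thesis
    using f_eq_image_if_aperiodic aperiodic_pair[OF t(1) False] by blast
qed

lemma f_eq_image:
  assumes not_Klein4: "\<not> G \<cong> Klein4"
  shows "A \<in> P0 \<Longrightarrow> f A = \<sigma> ` A"
proof (induction "card A" arbitrary: A rule: less_induct)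
  case less
  show ?case
  proof (cases "aperiodic A")
    case True
    then show ?thesis
      using f_eq_image_if_aperiodic less.prems by blast
  next
    case False
    then obtain t where t: "t \<in> carrier G" "t \<noteq> \<one>" "\<forall>x\<in>A. x \<otimes> t \<in> A"
      unfolding aperiodic_def by blast
    have A: "A \<subseteq> carrier G" "\<one> \<in> A"
      using less.prems by auto
    then have "t \<in> A"
      using t by (metis l_one)
    have A0: "A - {t} \<in> P0" and E: "{\<one>, t} \<in> P0"
      using A t by auto
    have "card (A - {t}) < card A"
      using card_Diff1_less[OF finite_subset[OF A(1) finite_carrier] \<open>t \<in> A\<close>] .
    then have "f (A - {t}) = \<sigma> ` (A - {t})"
      using less.hyps A0 by blast
    moreover have decomp: "(A - {t}) <#> {\<one>, t} = A"
      using periodic_decomposition[OF A(1) t(1,2) A(2) t(3)] .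
    ultimately have "f A = \<sigma> ` (A - {t}) <#> \<sigma> ` {\<one>, t}"
      using f_mult[OF A0 E] f_pair[OF not_Klein4 t(1,2)] by simp
    also have "\<dots> = \<sigma> ` A"
      using set_mult_hom[OF \<sigma>_hom, of "A - {t}" "{\<one>, t}"] decomp A t by auto
    finally show ?thesis .
  qed
qed

lemma restrict_\<sigma>_auto: "restrict \<sigma> (carrier G) \<in> auto G"
proof -
  have "restrict \<sigma> (carrier G) \<in> hom G G"
    by (rule hom_restrict[OF \<sigma>_hom]) simp
  moreover have "bij_betw (restrict \<sigma> (carrier G)) (carrier G) (carrier G)"
    using bij_\<sigma> by simp
  ultimately show ?thesis
    by (simp add: auto_def Bij_def)
qed

lemma image_map_\<sigma>:
  assumes "\<not> G \<cong> Klein4" "f \<in> extensional P0"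
  shows "image_map (restrict \<sigma> (carrier G)) = f"
proof (rule extensionalityI[of "image_map (restrict \<sigma> (carrier G))" P0 f])
  show "image_map (restrict \<sigma> (carrier G)) \<in> extensional P0"
    by (simp add: image_map_def)
  fix A assume "A \<in> P0"
  then show "image_map (restrict \<sigma> (carrier G)) A = f A"
    using f_eq_image[OF assms(1)] by (auto simp: image_map_def intro!: image_cong)
qed (fact assms(2))

end

theorem theorem3p7:
  fixes G :: "('a, 'b) monoid_scheme"
  assumes "comm_group G"
    and "finite (carrier G)"
    and "\<not> (G \<cong> DirProd (integer_mod_group 2) (integer_mod_group 2))"
  shows "AutoGroup (reduced_power_monoid G) \<cong> AutoGroup G"
proof -
  interpret comm_group G by fact
  let ?P = "reduced_power_monoid G"
  have "auto ?P \<subseteq> image_map ` auto G"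
  proof
    fix f assume f: "f \<in> auto ?P"
    then have "f \<in> iso ?P ?P" "f \<in> extensional P0"
      by (auto simp: auto_def Bij_def iso_def carrier_reduced_power_monoid)
    then interpret power_monoid_automorphism G f
      using assms(1,2)
      by (simp add: power_monoid_automorphism_def power_monoid_automorphism_axioms_def)
    have "f = image_map (restrict \<sigma> (carrier G))"
      using image_map_\<sigma> assms(3) \<open>f \<in> extensional P0\<close> by simp
    then show "f \<in> image_map ` auto G"
      using restrict_\<sigma>_auto by blast
  qed
  then have "bij_betw image_map (carrier (AutoGroup G)) (carrier (AutoGroup ?P))"
    using inj_on_image_map image_map_auto by (auto simp: bij_betw_def carrier_AutoGroup)
  then have "AutoGroup G \<cong> AutoGroup ?P"
    using image_map_hom by (intro is_isoI isoI)
  then show ?thesis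
    using group.iso_sym[OF AutoGroup] by blast
qed

end
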